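(* Let $\mathcal{X}\subset\mathbb{R}^d$ be a convex compact set with non-empty interior, let $k\ge 0$ and let $f\in\mathrm{Lip}(k)$. Let $t\ge1$ and let $x_1,\dots,x_t\in\mathcal{X}$ be evaluated points. Then for every $\varepsilon\in(0,k]$ we have $\mathcal{A}_{\varepsilon,t}\subseteq\mathcal{P}_{k,t}$, and for every $\varepsilon>k$ we have $\mathcal{P}_{k,t}\subseteq\mathcal{A}_{\varepsilon,t}$.
   Context: $\mathrm{Lip}(k)=\{g:\mathcal{X}\to\mathbb{R}:\ |g(x)-g(x')|\le k\|x-x'\|_2\ \forall x,x'\in\mathcal{X}\}$. For $\varepsilon>0$, the acceptance region is $\mathcal{A}_{\varepsilon,t}=\{x\in\mathcal{X}: \min_{i=1,\dots,t}(f(x_i)+\varepsilon\|x-x_i\|_2)\ge\max_{j=1,\dots,t}f(x_j)\}$. The set of consistent functions is $\mathcal{F}_{k,t}=\{g\in\mathrm{Lip}(k): g(x_i)=f(x_i)\ \forall i\in\{1,\dots,t\}\}$, and the set of potential maximizers is $\mathcal{P}_{k,t}=\{x\in\mathcal{X}:\ \exists g\in\mathcal{F}_{k,t}\text{ with } x\in\arg\max_{x'\in\mathcal{X}}g(x')\}$. *)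

theory Defs
  imports "HOL-Analysis.Analysis"
begin

text \<open>Lip(k) on the domain X: functions X -> R that are k-Lipschitz w.r.t. the Euclidean norm.
  Functions are total in HOL; only their values on X matter.\<close>
definition Lip :: "'a::euclidean_space set \<Rightarrow> real \<Rightarrow> ('a \<Rightarrow> real) set" where
  "Lip X k = {g. \<forall>x\<in>X. \<forall>x'\<in>X. \<bar>g x - g x'\<bar> \<le> k * norm (x - x')}"

definition acceptance_region ::
  "'a::euclidean_space set \<Rightarrow> ('a \<Rightarrow> real) \<Rightarrow> (nat \<Rightarrow> 'a) \<Rightarrow> nat \<Rightarrow> real \<Rightarrow> 'a set" where
  "acceptance_region X f xs t \<epsilon> =
     {x\<in>X. (MIN i\<in>{1..t}. f (xs i) + \<epsilon> * norm (x - xs i)) \<ge> (MAX j\<in>{1..t}. f (xs j))}"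

definition consistent_functions ::
  "'a::euclidean_space set \<Rightarrow> real \<Rightarrow> ('a \<Rightarrow> real) \<Rightarrow> (nat \<Rightarrow> 'a) \<Rightarrow> nat \<Rightarrow> ('a \<Rightarrow> real) set" where
  "consistent_functions X k f xs t = {g\<in>Lip X k. \<forall>i\<in>{1..t}. g (xs i) = f (xs i)}"

definition potential_maximizers ::
  "'a::euclidean_space set \<Rightarrow> real \<Rightarrow> ('a \<Rightarrow> real) \<Rightarrow> (nat \<Rightarrow> 'a) \<Rightarrow> nat \<Rightarrow> 'a set" where
  "potential_maximizers X k f xs t =
     {x\<in>X. \<exists>g\<in>consistent_functions X k f xs t. \<forall>x'\<in>X. g x' \<le> g x}"

end

theory Submission
  imports Defs
begin

text \<open>Write \<open>M\<close> for the largest observed value. If \<open>x\<close> is accepted with some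
  \<open>\<epsilon> \<le> k\<close>, then the cone envelope \<open>U y = min\<^sub>i (f x\<^sub>i + k \<parallel>y - x\<^sub>i\<parallel>)\<close> is at least \<open>M\<close>
  at \<open>x\<close>; truncating it at \<open>M\<close> gives a \<open>k\<close>-Lipschitz function that interpolates the data
  (because \<open>f\<close> itself is \<open>k\<close>-Lipschitz) and attains its maximum \<open>M\<close> at \<open>x\<close>.
  Conversely, a consistent \<open>g\<close> maximized at \<open>x\<close> satisfies
  \<open>M \<le> g x \<le> f x\<^sub>i + k \<parallel>x - x\<^sub>i\<parallel> \<le> f x\<^sub>i + \<epsilon> \<parallel>x - x\<^sub>i\<parallel>\<close> for \<open>k \<le> \<epsilon>\<close>.\<close>

lemma mem_acceptance_region_iff:
  assumes "t \<ge> 1"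
  shows "x \<in> acceptance_region X f xs t \<epsilon> \<longleftrightarrow>
           x \<in> X \<and> (\<forall>i\<in>{1..t}. (MAX j\<in>{1..t}. f (xs j)) \<le> f (xs i) + \<epsilon> * norm (x - xs i))"
  using assms unfolding acceptance_region_def by auto

lemma Max_observed_ge:
  fixes xs :: "nat \<Rightarrow> 'a"
  assumes "j \<in> {1..t}"
  shows "f (xs j) \<le> (MAX i\<in>{1..t}. f (xs i))"
  using assms by (intro Max_ge) auto

lemma Lip_le:
  assumes "g \<in> Lip X k" and "x \<in> X" and "x' \<in> X"
  shows "g x \<le> g x' + k * norm (x - x')"
proof -
  have "\<bar>g x - g x'\<bar> \<le> k * norm (x - x')"
    using assms unfolding Lip_def by blast
  then show ?thesis
    by linarith
qed

definition lipschitz_upper_envelope ::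
  "real \<Rightarrow> ('a::real_normed_vector \<Rightarrow> real) \<Rightarrow> (nat \<Rightarrow> 'a) \<Rightarrow> nat \<Rightarrow> 'a \<Rightarrow> real" where
  "lipschitz_upper_envelope k f xs t y = (MIN i\<in>{1..t}. f (xs i) + k * norm (y - xs i))"

lemma lipschitz_upper_envelope_le:
  assumes "t \<ge> 1" and "k \<ge> 0"
  shows "lipschitz_upper_envelope k f xs t y
           \<le> lipschitz_upper_envelope k f xs t y' + k * norm (y - y')"
proof -
  have "lipschitz_upper_envelope k f xs t y' \<in> (\<lambda>i. f (xs i) + k * norm (y' - xs i)) ` {1..t}"
    unfolding lipschitz_upper_envelope_def using assms(1) by (intro Min_in) auto
  then obtain i where i: "i \<in> {1..t}"
    and min_eq: "lipschitz_upper_envelope k f xs t y' = f (xs i) + k * norm (y' - xs i)"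
    by blast
  have "lipschitz_upper_envelope k f xs t y \<le> f (xs i) + k * norm (y - xs i)"
    using i unfolding lipschitz_upper_envelope_def by (intro Min_le) auto
  also have "\<dots> \<le> f (xs i) + k * (norm (y - y') + norm (y' - xs i))"
    using assms(2) norm_triangle_ineq[of "y - y'" "y' - xs i"] by (simp add: mult_left_mono)
  finally show ?thesis
    using min_eq by (simp add: algebra_simps)
qed

lemma lipschitz_upper_envelope_in_Lip:
  assumes "t \<ge> 1" and "k \<ge> 0"
  shows "lipschitz_upper_envelope k f xs t \<in> Lip X k"
proof -
  have "\<bar>lipschitz_upper_envelope k f xs t y - lipschitz_upper_envelope k f xs t y'\<bar>
          \<le> k * norm (y - y')" for y y'
    using lipschitz_upper_envelope_le[OF assms, of f xs y y']
      lipschitz_upper_envelope_le[OF assms, of f xs y' y]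
    by (simp add: abs_le_iff norm_minus_commute)
  then show ?thesis
    unfolding Lip_def by blast
qed

lemma Lip_min_const:
  assumes "g \<in> Lip X k"
  shows "(\<lambda>y. min (g y) c) \<in> Lip X k"
  unfolding Lip_def
proof (intro CollectI ballI)
  fix y y' assume y: "y \<in> X" and y': "y' \<in> X"
  have "g y \<le> g y' + k * norm (y - y')" "g y' \<le> g y + k * norm (y - y')"
    using Lip_le[OF assms y y'] Lip_le[OF assms y' y] by (simp_all add: norm_minus_commute)
  then show "\<bar>min (g y) c - min (g y') c\<bar> \<le> k * norm (y - y')"
    by linarith
qed

lemma lipschitz_upper_envelope_interpolates:
  assumes "f \<in> Lip X k" and "\<forall>i\<in>{1..t}. xs i \<in> X" and "j \<in> {1..t}"
  shows "lipschitz_upper_envelope k f xs t (xs j) = f (xs j)"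
proof (rule antisym)
  show "lipschitz_upper_envelope k f xs t (xs j) \<le> f (xs j)"
    using assms(3) unfolding lipschitz_upper_envelope_def
    by (intro Min_le) (auto intro!: image_eqI[where x = j])
  have "f (xs j) \<le> f (xs i) + k * norm (xs j - xs i)" if "i \<in> {1..t}" for i
    using Lip_le[OF assms(1), of "xs j" "xs i"] assms(2,3) that by blast
  then show "f (xs j) \<le> lipschitz_upper_envelope k f xs t (xs j)"
    using assms(3) unfolding lipschitz_upper_envelope_def by auto
qed

lemma acceptance_region_subset_potential_maximizers:
  assumes "k \<ge> 0" and "f \<in> Lip X k" and "t \<ge> 1" and "\<forall>i\<in>{1..t}. xs i \<in> X"
    and "\<epsilon> \<le> k"
  shows "acceptance_region X f xs t \<epsilon> \<subseteq> potential_maximizers X k f xs t"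
proof
  fix x assume "x \<in> acceptance_region X f xs t \<epsilon>"
  define M where "M = (MAX j\<in>{1..t}. f (xs j))"
  define g where "g y = min (lipschitz_upper_envelope k f xs t y) M" for y
  have x: "x \<in> X" "\<forall>i\<in>{1..t}. M \<le> f (xs i) + \<epsilon> * norm (x - xs i)"
    using \<open>x \<in> acceptance_region X f xs t \<epsilon>\<close>
    unfolding mem_acceptance_region_iff[OF assms(3)] M_def by blast+
  have "M \<le> f (xs i) + k * norm (x - xs i)" if "i \<in> {1..t}" for i
    using x(2) that assms(5) mult_right_mono[of \<epsilon> k "norm (x - xs i)"] by force
  then have "M \<le> lipschitz_upper_envelope k f xs t x"
    using assms(3) unfolding lipschitz_upper_envelope_def by auto
  then have g_max: "\<forall>x'\<in>X. g x' \<le> g x"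
    unfolding g_def by simp
  have "g \<in> Lip X k"
    unfolding g_def by (intro Lip_min_const lipschitz_upper_envelope_in_Lip assms)
  moreover have "g (xs j) = f (xs j)" if "j \<in> {1..t}" for j
    using lipschitz_upper_envelope_interpolates[OF assms(2,4) that] Max_observed_ge[OF that, of f xs]
    unfolding g_def M_def by simp
  ultimately have "g \<in> consistent_functions X k f xs t"
    unfolding consistent_functions_def by blast
  then show "x \<in> potential_maximizers X k f xs t"
    unfolding potential_maximizers_def using x(1) g_max by blast
qed

lemma potential_maximizers_subset_acceptance_region:
  assumes "t \<ge> 1" and "\<forall>i\<in>{1..t}. xs i \<in> X" and "k \<le> \<epsilon>"
  shows "potential_maximizers X k f xs t \<subseteq> acceptance_region X f xs t \<epsilon>"
proof
  fix x assume "x \<in> potential_maximizers X k f xs t"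
  then obtain g where x: "x \<in> X" and g_Lip: "g \<in> Lip X k"
    and g_data: "\<forall>i\<in>{1..t}. g (xs i) = f (xs i)" and g_max: "\<forall>x'\<in>X. g x' \<le> g x"
    unfolding potential_maximizers_def consistent_functions_def by blast
  have "f (xs j) \<le> g x" if "j \<in> {1..t}" for j
  proof -
    have "f (xs j) = g (xs j)"
      using g_data that by simp
    also have "\<dots> \<le> g x"
      using g_max assms(2) that by blast
    finally show ?thesis .
  qed
  then have "(MAX j\<in>{1..t}. f (xs j)) \<le> g x"
    using assms(1) by (simp add: Max_le_iff)
  moreover have "g x \<le> f (xs i) + \<epsilon> * norm (x - xs i)" if "i \<in> {1..t}" for i
  proof -
    have "g x \<le> g (xs i) + k * norm (x - xs i)"
      using Lip_le[OF g_Lip x, of "xs i"] assms(2) that by blast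
    also have "\<dots> \<le> f (xs i) + \<epsilon> * norm (x - xs i)"
      using g_data that assms(3) by (simp add: mult_right_mono)
    finally show ?thesis .
  qed
  ultimately have "\<forall>i\<in>{1..t}. (MAX j\<in>{1..t}. f (xs j)) \<le> f (xs i) + \<epsilon> * norm (x - xs i)"
    by (meson order_trans)
  then show "x \<in> acceptance_region X f xs t \<epsilon>"
    unfolding mem_acceptance_region_iff[OF assms(1)] using x by blast
qed

theorem proposition2:
  fixes X :: "'a::euclidean_space set" and k :: real and f :: "'a \<Rightarrow> real"
    and xs :: "nat \<Rightarrow> 'a" and t :: nat
  assumes "convex X" and "compact X" and "interior X \<noteq> {}"
    and "k \<ge> 0" and "f \<in> Lip X k"
    and "t \<ge> 1" and "\<forall>i\<in>{1..t}. xs i \<in> X"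
  shows "(\<forall>\<epsilon>. 0 < \<epsilon> \<and> \<epsilon> \<le> k \<longrightarrow>
            acceptance_region X f xs t \<epsilon> \<subseteq> potential_maximizers X k f xs t)
       \<and> (\<forall>\<epsilon>. \<epsilon> > k \<longrightarrow>
            potential_maximizers X k f xs t \<subseteq> acceptance_region X f xs t \<epsilon>)"
  using acceptance_region_subset_potential_maximizers[OF assms(4-7)]
    potential_maximizers_subset_acceptance_region[OF assms(6-7)]
  by auto

end
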